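(* Let $G$ be a graph and $k$ an integer, and assume: (A) $G$ contains no two adjacent vertices $u,w$ with $N(w)\subseteq N[u]$; and (B) there is no vertex $w$ of $G$ together with a partition $(C_1,C_2)$ of $N(w)$ such that $|C_1|\ge|C_2|$, $C_1$ and $C_2$ are cliques, and every vertex $c_1\in C_1$ lies in exactly one pair $\{c_1,c_2\}$ with $c_2\in C_2$ and $\{c_1,c_2\}\notin E(G)$. Let $v$ be a vertex of degree four such that $G[N(v)]$ has at least three edges. Then $G[N(v)]$ is a path. Moreover, writing $N(v)=\{a,b,c,d\}$ so that $G[N(v)]$ is the path $a-b-c-d$, let $G'$ be the graph with vertex set $V(G)\setminus\{v\}$ whose edge set consists of the edges of $G-v$ together with the set $F$ consisting of all pairs of distinct vertices of $N(v)$, all pairs $\{x,y\}$ with $x\in\{a,b\}$ and $y\in N(d)$, and all pairs $\{x,y\}$ with $x\in\{c,d\}$ and $y\in N(a)$ (pairs containing $v$ being omitted). Then $G$ has a vertex cover of size $k$ if and only if $G'$ has a vertex cover of size $k$.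
   Context: All graphs are finite, simple, undirected. $N(x)$ is the open and $N[x]=N(x)\cup\{x\}$ the closed neighborhood; $G[X]$ is the subgraph induced by $X$. A clique is a set of pairwise adjacent vertices. A vertex cover is a set of vertices containing at least one endpoint of every edge; "has a vertex cover of size $k$" means has a vertex cover of size at most $k$. *)

theory Defs
  imports Main
begin

definition graph :: "'a set \<Rightarrow> ('a \<Rightarrow> 'a \<Rightarrow> bool) \<Rightarrow> bool" where
  "graph V E \<longleftrightarrow> finite V \<and> (\<forall>x y. E x y \<longrightarrow> x \<in> V \<and> y \<in> V)
     \<and> (\<forall>x y. E x y \<longrightarrow> E y x) \<and> (\<forall>x. \<not> E x x)"

definition nbhd :: "('a \<Rightarrow> 'a \<Rightarrow> bool) \<Rightarrow> 'a \<Rightarrow> 'a set" where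
  "nbhd E x = {y. E x y}"

definition cnbhd :: "('a \<Rightarrow> 'a \<Rightarrow> bool) \<Rightarrow> 'a \<Rightarrow> 'a set" where
  "cnbhd E x = insert x (nbhd E x)"

definition is_clique :: "('a \<Rightarrow> 'a \<Rightarrow> bool) \<Rightarrow> 'a set \<Rightarrow> bool" where
  "is_clique E C \<longleftrightarrow> (\<forall>x\<in>C. \<forall>y\<in>C. x \<noteq> y \<longrightarrow> E x y)"

definition vertex_cover :: "'a set \<Rightarrow> ('a \<Rightarrow> 'a \<Rightarrow> bool) \<Rightarrow> 'a set \<Rightarrow> bool" where
  "vertex_cover V E C \<longleftrightarrow> C \<subseteq> V \<and> (\<forall>x y. E x y \<longrightarrow> x \<in> C \<or> y \<in> C)"

definition has_vc :: "'a set \<Rightarrow> ('a \<Rightarrow> 'a \<Rightarrow> bool) \<Rightarrow> int \<Rightarrow> bool" where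
  "has_vc V E k \<longleftrightarrow> (\<exists>C. vertex_cover V E C \<and> int (card C) \<le> k)"

definition induced_edges :: "('a \<Rightarrow> 'a \<Rightarrow> bool) \<Rightarrow> 'a set \<Rightarrow> 'a set set" where
  "induced_edges E X = {{x, y} | x y. x \<in> X \<and> y \<in> X \<and> E x y}"

definition cond_A :: "('a \<Rightarrow> 'a \<Rightarrow> bool) \<Rightarrow> bool" where
  "cond_A E \<longleftrightarrow> \<not> (\<exists>u w. E u w \<and> nbhd E w \<subseteq> cnbhd E u)"

definition cond_B :: "'a set \<Rightarrow> ('a \<Rightarrow> 'a \<Rightarrow> bool) \<Rightarrow> bool" where
  "cond_B V E \<longleftrightarrow> \<not> (\<exists>w C1 C2. w \<in> V \<and> C1 \<union> C2 = nbhd E w \<and> C1 \<inter> C2 = {}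
      \<and> card C1 \<ge> card C2 \<and> is_clique E C1 \<and> is_clique E C2
      \<and> (\<forall>c1\<in>C1. \<exists>!c2. c2 \<in> C2 \<and> \<not> E c1 c2))"

definition nbhd_path :: "('a \<Rightarrow> 'a \<Rightarrow> bool) \<Rightarrow> 'a \<Rightarrow> 'a \<Rightarrow> 'a \<Rightarrow> 'a \<Rightarrow> 'a \<Rightarrow> bool" where
  "nbhd_path E v a b c d \<longleftrightarrow> distinct [a, b, c, d] \<and> nbhd E v = {a, b, c, d}
     \<and> E a b \<and> E b c \<and> E c d \<and> \<not> E a c \<and> \<not> E a d \<and> \<not> E b d"

text \<open>The set F of new pairs (as an oriented relation; symmetrised in reduced_edges).\<close>
definition new_pairs :: "('a \<Rightarrow> 'a \<Rightarrow> bool) \<Rightarrow> 'a \<Rightarrow> 'a \<Rightarrow> 'a \<Rightarrow> 'a \<Rightarrow> 'a \<Rightarrow> 'a \<Rightarrow> 'a \<Rightarrow> bool" where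
  "new_pairs E v a b c d x y \<longleftrightarrow> x \<noteq> y \<and>
     ((x \<in> nbhd E v \<and> y \<in> nbhd E v)
      \<or> (x \<in> {a, b} \<and> y \<in> nbhd E d)
      \<or> (x \<in> {c, d} \<and> y \<in> nbhd E a))"

definition reduced_edges :: "('a \<Rightarrow> 'a \<Rightarrow> bool) \<Rightarrow> 'a \<Rightarrow> 'a \<Rightarrow> 'a \<Rightarrow> 'a \<Rightarrow> 'a \<Rightarrow> 'a \<Rightarrow> 'a \<Rightarrow> bool" where
  "reduced_edges E v a b c d x y \<longleftrightarrow> x \<noteq> v \<and> y \<noteq> v \<and>
     (E x y \<or> new_pairs E v a b c d x y \<or> new_pairs E v a b c d y x)"

end

theory Submission
  imports Defs
begin

text \<open>Condition (A) says that no neighbour of v is adjacent to the three other neighbours,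
  and condition (B) forbids G[N(v)] to be a 4-cycle or a triangle plus an isolated vertex;
  among the graphs on four vertices with at least three edges only the path a-b-c-d survives.
  A vertex cover of G either avoids v, and then contains N(v) and already covers G', or contains v,
  and then v can be traded for a vertex of N(v). Conversely, a vertex cover of G' misses at most
  one vertex of N(v); if it misses a or b it contains N(d) - v, so d can be traded for v, and
  symmetrically a can be traded for v if it misses c or d.\<close>

lemma graph_sym: "graph V E \<Longrightarrow> E x y \<Longrightarrow> E y x"
  and graph_irrefl: "graph V E \<Longrightarrow> \<not> E x x"
  and graph_edge_in: "graph V E \<Longrightarrow> E x y \<Longrightarrow> x \<in> V"
  and graph_finite: "graph V E \<Longrightarrow> finite V"
  unfolding graph_def by blast+

lemma nbhd_subset: "graph V E \<Longrightarrow> nbhd E v \<subseteq> V - {v}"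
  unfolding graph_def nbhd_def by blast

lemma card_eq_4E:
  assumes "card X = 4"
  obtains p q r s where "X = {p, q, r, s}" and "distinct [p, q, r, s]"
  using assms by (simp add: numeral_eq_Suc card_Suc_eq) fastforce

lemma card_eq_4_subset_eq:
  assumes "card X = 4" and "{x, y, z, t} \<subseteq> X" and "distinct [x, y, z, t]"
  shows "X = {x, y, z, t}"
proof (rule card_subset_eq[symmetric])
  show "finite X"
    using assms(1) by (metis card.infinite zero_neq_numeral)
qed (use assms in auto)

lemma card_insert_Diff_le: "finite C \<Longrightarrow> y \<in> C \<Longrightarrow> card (insert x (C - {y})) \<le> card C"
  by (metis card_Suc_Diff1 card_insert_le_m1 diff_Suc_1 le_refl zero_less_Suc)

lemma card_induced_edges_four_le:
  assumes sym: "\<And>x y. E x y \<Longrightarrow> E y x" and irrefl: "\<And>x. \<not> E x x"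
  shows "card (induced_edges E {p, q, r, s}) \<le> of_bool (E p q) + of_bool (E p r) + of_bool (E p s)
    + of_bool (E q r) + of_bool (E q s) + of_bool (E r s)"
proof -
  let ?e = "\<lambda>x y. if E x y then {{x, y}} else {}"
  have card_if: "card (?e x y) = of_bool (E x y)" for x y
    by simp
  have "induced_edges E {p, q, r, s} \<subseteq> ?e p q \<union> ?e p r \<union> ?e p s \<union> ?e q r \<union> ?e q s \<union> ?e r s"
  proof
    fix e assume "e \<in> induced_edges E {p, q, r, s}"
    then obtain x y where "e = {x, y}" "x \<in> {p, q, r, s}" "y \<in> {p, q, r, s}" "E x y"
      unfolding induced_edges_def by blast
    then show "e \<in> ?e p q \<union> ?e p r \<union> ?e p s \<union> ?e q r \<union> ?e q s \<union> ?e r s"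
      using sym irrefl by (elim insertE emptyE) (simp_all add: insert_commute)
  qed
  then have "card (induced_edges E {p, q, r, s})
      \<le> card (?e p q \<union> ?e p r \<union> ?e p s \<union> ?e q r \<union> ?e q s \<union> ?e r s)"
    by (rule card_mono[rotated]) simp
  also have "\<dots> \<le> card (?e p q) + card (?e p r) + card (?e p s) + card (?e q r) + card (?e q s) + card (?e r s)"
    by (intro order_trans[OF card_Un_le] add_right_mono) simp_all
  also have "\<dots> = of_bool (E p q) + of_bool (E p r) + of_bool (E p s)
    + of_bool (E q r) + of_bool (E q s) + of_bool (E r s)"
    by (simp only: card_if)
  finally show ?thesis .
qed

lemma path_in_four_vertex_graph:
  assumes sym: "\<And>x y. E x y \<Longrightarrow> E y x" and irrefl: "\<And>x. \<not> E x x"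
    and X: "X = {p, q, r, s}" and dist: "distinct [p, q, r, s]"
    and no_dominating: "\<And>x. x \<in> X \<Longrightarrow> \<exists>y\<in>X. y \<noteq> x \<and> \<not> E x y"
    and no_triangle: "\<And>x y z t. {x, y, z, t} \<subseteq> X \<Longrightarrow> distinct [x, y, z, t] \<Longrightarrow>
      E x y \<Longrightarrow> E y z \<Longrightarrow> E x z \<Longrightarrow> E x t \<or> E y t \<or> E z t"
    and no_square: "\<And>x1 x2 y1 y2. {x1, x2, y1, y2} \<subseteq> X \<Longrightarrow> distinct [x1, x2, y1, y2] \<Longrightarrow>
      E x1 x2 \<Longrightarrow> E x2 y1 \<Longrightarrow> E y1 y2 \<Longrightarrow> E y2 x1 \<Longrightarrow> E x1 y1 \<or> E x2 y2"
    and three_edges: "3 \<le> of_bool (E p q) + of_bool (E p r) + of_bool (E p s)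
      + of_bool (E q r) + of_bool (E q s) + (of_bool (E r s) :: nat)"
  shows "\<exists>a\<in>X. \<exists>b\<in>X. \<exists>c\<in>X. \<exists>d\<in>X. E a b \<and> E b c \<and> E c d \<and> \<not> E a c \<and> \<not> E a d \<and> \<not> E b d"
proof -
  have sym_iff: "E q p = E p q" "E r p = E p r" "E s p = E p s" "E r q = E q r" "E s q = E q s" "E s r = E r s"
    using sym by blast+
  have neq: "p \<noteq> q" "p \<noteq> r" "p \<noteq> s" "q \<noteq> r" "q \<noteq> s" "r \<noteq> s"
    using dist by auto
  show ?thesis
    using no_dominating[of p] no_dominating[of q] no_dominating[of r] no_dominating[of s]
      no_triangle[of p q r s] no_triangle[of p q s r] no_triangle[of p r s q] no_triangle[of q r s p]
      no_square[of p q r s] no_square[of p q s r] no_square[of p r q s] three_edges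
    unfolding X sym_iff
    by (cases "E p q"; cases "E p r"; cases "E p s"; cases "E q r"; cases "E q s"; cases "E r s")
      (simp_all add: irrefl sym_iff neq neq[THEN not_sym])
qed

lemma induced_path_distinct:
  assumes "\<And>x y. E x y \<Longrightarrow> E y x" and "\<And>x. \<not> E x x"
    and "E a b" "E b c" "E c d" "\<not> E a c" "\<not> E a d" "\<not> E b d"
  shows "distinct [a, b, c, d]"
  using assms by auto

lemma cond_A_nonadjacent_in_nbhd:
  assumes "cond_A E" and "E u w"
  shows "\<exists>y\<in>nbhd E w. y \<noteq> u \<and> \<not> E u y"
  using assms unfolding cond_A_def cnbhd_def nbhd_def by blast

lemma cond_BE:
  assumes "cond_B V E" and "w \<in> V" and "C1 \<union> C2 = nbhd E w" and "C1 \<inter> C2 = {}"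
    and "card C2 \<le> card C1" and "is_clique E C1" and "is_clique E C2"
    and "\<forall>c1\<in>C1. \<exists>!c2. c2 \<in> C2 \<and> \<not> E c1 c2"
  shows False
  using assms unfolding cond_B_def by blast

lemma cond_B_no_triangle_isolated:
  assumes "cond_B V E" and "w \<in> V" and "nbhd E w = {x, y, z, t}" and "distinct [x, y, z, t]"
    and sym: "\<And>x y. E x y \<Longrightarrow> E y x"
    and "E x y" "E y z" "E x z"
  shows "E x t \<or> E y t \<or> E z t"
proof (rule ccontr)
  assume "\<not> (E x t \<or> E y t \<or> E z t)"
  then show False
    using assms by (intro cond_BE[of V E w "{x, y, z}" "{t}"]) (auto simp: is_clique_def)
qed

lemma cond_B_no_square:
  assumes "cond_B V E" and "w \<in> V" and "nbhd E w = {x1, x2, y1, y2}" and "distinct [x1, x2, y1, y2]"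
    and sym: "\<And>x y. E x y \<Longrightarrow> E y x"
    and "E x1 x2" "E x2 y1" "E y1 y2" "E y2 x1"
  shows "E x1 y1 \<or> E x2 y2"
proof (rule ccontr)
  assume "\<not> (E x1 y1 \<or> E x2 y2)"
  then show False
    using assms by (intro cond_BE[of V E w "{x1, x2}" "{y1, y2}"]) (auto simp: is_clique_def)
qed

lemma nbhd_path_exists:
  assumes G: "graph V E" and A: "cond_A E" and B: "cond_B V E" and "v \<in> V"
    and four: "card (nbhd E v) = 4" and three: "3 \<le> card (induced_edges E (nbhd E v))"
  shows "\<exists>a b c d. nbhd_path E v a b c d"
proof -
  have sym: "\<And>x y. E x y \<Longrightarrow> E y x" and irrefl: "\<And>x. \<not> E x x"
    using graph_sym[OF G] graph_irrefl[OF G] by blast+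
  obtain p q r s where N: "nbhd E v = {p, q, r, s}" and dist: "distinct [p, q, r, s]"
    using four by (rule card_eq_4E)
  have "\<exists>a\<in>nbhd E v. \<exists>b\<in>nbhd E v. \<exists>c\<in>nbhd E v. \<exists>d\<in>nbhd E v.
      E a b \<and> E b c \<and> E c d \<and> \<not> E a c \<and> \<not> E a d \<and> \<not> E b d"
  proof (rule path_in_four_vertex_graph[OF sym irrefl N dist])
    show "\<exists>y\<in>nbhd E v. y \<noteq> x \<and> \<not> E x y" if "x \<in> nbhd E v" for x
      using that A by (intro cond_A_nonadjacent_in_nbhd) (auto simp: nbhd_def intro: sym)
    show "E x t \<or> E y t \<or> E z t"
      if "{x, y, z, t} \<subseteq> nbhd E v" "distinct [x, y, z, t]" "E x y" "E y z" "E x z" for x y z t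
      using that card_eq_4_subset_eq[OF four]
      by (intro cond_B_no_triangle_isolated[OF B \<open>v \<in> V\<close> _ _ sym]) auto
    show "E x1 y1 \<or> E x2 y2"
      if "{x1, x2, y1, y2} \<subseteq> nbhd E v" "distinct [x1, x2, y1, y2]"
        "E x1 x2" "E x2 y1" "E y1 y2" "E y2 x1" for x1 x2 y1 y2
      using that card_eq_4_subset_eq[OF four]
      by (intro cond_B_no_square[OF B \<open>v \<in> V\<close> _ _ sym]) auto
    show "3 \<le> of_bool (E p q) + of_bool (E p r) + of_bool (E p s)
        + of_bool (E q r) + of_bool (E q s) + (of_bool (E r s) :: nat)"
      using three card_induced_edges_four_le[of E, OF sym irrefl, of p q r s] N by simp
  qed
  then obtain a b c d where abcd: "{a, b, c, d} \<subseteq> nbhd E v"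
    and path: "E a b" "E b c" "E c d" "\<not> E a c" "\<not> E a d" "\<not> E b d"
    by blast
  have dist_abcd: "distinct [a, b, c, d]"
    using sym irrefl path by (rule induced_path_distinct)
  then have "nbhd E v = {a, b, c, d}"
    using card_eq_4_subset_eq[OF four abcd] by blast
  with dist_abcd path show ?thesis
    unfolding nbhd_path_def by blast
qed

definition covers_except :: "('a \<Rightarrow> 'a \<Rightarrow> bool) \<Rightarrow> 'a \<Rightarrow> 'a set \<Rightarrow> bool" where
  "covers_except E v C \<longleftrightarrow> (\<forall>x y. E x y \<longrightarrow> x \<noteq> v \<longrightarrow> y \<noteq> v \<longrightarrow> x \<in> C \<or> y \<in> C)"

lemma covers_except_if_vertex_cover: "vertex_cover V E C \<Longrightarrow> covers_except E v (C - {v})"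
  unfolding vertex_cover_def covers_except_def by blast

lemma covers_except_mono: "covers_except E v C \<Longrightarrow> C \<subseteq> D \<Longrightarrow> covers_except E v D"
  unfolding covers_except_def by blast

lemma covers_except_Diff:
  assumes "graph V E" and "covers_except E v C" and "nbhd E u - {v} \<subseteq> C"
  shows "covers_except E v (C - {u})"
  using assms graph_sym[OF assms(1)] graph_irrefl[OF assms(1)]
  unfolding covers_except_def nbhd_def by blast

lemma vertex_cover_if_covers_except:
  assumes "graph V E" and "C \<subseteq> V" and "covers_except E v C" and "v \<in> C \<or> nbhd E v \<subseteq> C"
  shows "vertex_cover V E C"
  using assms graph_sym[OF assms(1)] unfolding vertex_cover_def covers_except_def nbhd_def by blast

lemma reduced_edges_iff:
  assumes G: "graph V E" and P: "nbhd_path E v a b c d"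
  shows "reduced_edges E v a b c d x y \<longleftrightarrow> x \<noteq> v \<and> y \<noteq> v \<and>
    (E x y \<or> (x \<in> nbhd E v \<and> y \<in> nbhd E v \<and> x \<noteq> y)
      \<or> (x \<in> {a, b} \<and> E d y) \<or> (y \<in> {a, b} \<and> E d x)
      \<or> (x \<in> {c, d} \<and> E a y) \<or> (y \<in> {c, d} \<and> E a x))"
proof -
  have "\<not> E d a" "\<not> E d b" "\<not> E a c" "\<not> E a d"
    using P graph_sym[OF G] unfolding nbhd_path_def by blast+
  then show ?thesis
    unfolding reduced_edges_def new_pairs_def nbhd_def by auto
qed

lemma vertex_cover_reduced_edges_iff:
  assumes G: "graph V E" and P: "nbhd_path E v a b c d"
  shows "vertex_cover (V - {v}) (reduced_edges E v a b c d) C \<longleftrightarrow>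
    C \<subseteq> V - {v} \<and> covers_except E v C
    \<and> (\<forall>x\<in>nbhd E v. \<forall>y\<in>nbhd E v. x \<noteq> y \<longrightarrow> x \<in> C \<or> y \<in> C)
    \<and> (\<forall>x\<in>{a, b}. x \<notin> C \<longrightarrow> nbhd E d - {v} \<subseteq> C)
    \<and> (\<forall>x\<in>{c, d}. x \<notin> C \<longrightarrow> nbhd E a - {v} \<subseteq> C)"
proof -
  have nbhd_v: "nbhd E v \<subseteq> V - {v}"
    by (rule nbhd_subset[OF G])
  then have not_v: "a \<noteq> v" "b \<noteq> v" "c \<noteq> v" "d \<noteq> v"
    using P unfolding nbhd_path_def by auto
  show ?thesis
    unfolding vertex_cover_def covers_except_def reduced_edges_iff[OF G P]
    using nbhd_v not_v by (auto simp: nbhd_def) blast+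
qed

lemma reduced_cover_of_cover:
  assumes G: "graph V E" and P: "nbhd_path E v a b c d" and C: "vertex_cover V E C"
  obtains C' where "vertex_cover (V - {v}) (reduced_edges E v a b c d) C'" and "card C' \<le> card C"
proof -
  have N: "nbhd E v = {a, b, c, d}" and path: "E a b" "E b c" "E c d"
    using P unfolding nbhd_path_def by auto
  have not_v: "a \<noteq> v" "b \<noteq> v" "c \<noteq> v" "d \<noteq> v"
    using nbhd_subset[OF G, of v] N by auto
  have covered: "x \<in> C \<or> y \<in> C" if "E x y" for x y
    using C that unfolding vertex_cover_def by blast
  have nbhd_covered: "nbhd E x \<subseteq> C" if "x \<notin> C" for x
    using covered that unfolding nbhd_def by blast
  have "finite C"
    using C graph_finite[OF G] finite_subset unfolding vertex_cover_def by blast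
  show ?thesis
  proof (cases "v \<in> C")
    case False
    have "a \<in> C" "b \<in> C" "c \<in> C" "d \<in> C"
      using nbhd_covered[OF False] N by auto
    moreover have "C \<subseteq> V - {v}" "covers_except E v C"
      using C False covers_except_if_vertex_cover[OF C, of v] unfolding vertex_cover_def by auto
    ultimately have "vertex_cover (V - {v}) (reduced_edges E v a b c d) C"
      unfolding vertex_cover_reduced_edges_iff[OF G P] N by blast
    then show ?thesis
      using that by blast
  next
    case True
    \<comment> \<open>If a (resp. d) is missing from C, then C contains N(a) (resp. N(d)), which covers the
      new pairs at the other end of the path; otherwise the new vertex completes N(v).\<close>
    define x where "x = (if a \<notin> C then a else if d \<notin> C then d else if b \<notin> C then b else c)"
    have "x \<in> nbhd E v"
      unfolding x_def N by simp
    have "vertex_cover (V - {v}) (reduced_edges E v a b c d) (insert x (C - {v}))"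
      unfolding vertex_cover_reduced_edges_iff[OF G P]
    proof (intro conjI)
      show "insert x (C - {v}) \<subseteq> V - {v}"
        using C \<open>x \<in> nbhd E v\<close> nbhd_subset[OF G, of v] unfolding vertex_cover_def by blast
      show "covers_except E v (insert x (C - {v}))"
        using covers_except_if_vertex_cover[OF C] by (rule covers_except_mono) blast
    qed (use path covered nbhd_covered not_v in \<open>auto simp: x_def N\<close>)
    moreover have "card (insert x (C - {v})) \<le> card C"
      using \<open>finite C\<close> True by (rule card_insert_Diff_le)
    ultimately show ?thesis
      using that by blast
  qed
qed

lemma cover_of_reduced_cover:
  assumes G: "graph V E" and P: "nbhd_path E v a b c d"
    and C: "vertex_cover (V - {v}) (reduced_edges E v a b c d) C"
  obtains C' where "vertex_cover V E C'" and "card C' \<le> card C"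
proof -
  have N: "nbhd E v = {a, b, c, d}" and dist: "distinct [a, b, c, d]"
    using P unfolding nbhd_path_def by auto
  have sub: "C \<subseteq> V - {v}" and cov: "covers_except E v C"
    and pairs: "\<forall>x\<in>nbhd E v. \<forall>y\<in>nbhd E v. x \<noteq> y \<longrightarrow> x \<in> C \<or> y \<in> C"
    and ab: "\<forall>x\<in>{a, b}. x \<notin> C \<longrightarrow> nbhd E d - {v} \<subseteq> C"
    and cd: "\<forall>x\<in>{c, d}. x \<notin> C \<longrightarrow> nbhd E a - {v} \<subseteq> C"
    using C unfolding vertex_cover_reduced_edges_iff[OF G P] by simp_all
  have "v \<in> V"
    using N graph_edge_in[OF G] unfolding nbhd_def by blast
  have "finite C"
    using sub graph_finite[OF G] finite_subset by blast
  show ?thesis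
  proof (cases "nbhd E v \<subseteq> C")
    case True
    then have "vertex_cover V E C"
      using sub by (intro vertex_cover_if_covers_except[OF G _ cov]) auto
    then show ?thesis
      using that by blast
  next
    case False
    then obtain x where x: "x \<in> {a, b, c, d}" "x \<notin> C"
      unfolding N by blast
    define u where "u = (if x \<in> {a, b} then d else a)"
    have "u \<in> {a, b, c, d}" "u \<noteq> x"
      using x dist unfolding u_def by auto
    then have "u \<in> C"
      using pairs x unfolding N by blast
    have "nbhd E u - {v} \<subseteq> C"
      using ab cd x unfolding u_def by auto
    then have "covers_except E v (C - {u})"
      by (rule covers_except_Diff[OF G cov])
    then have "vertex_cover V E (insert v (C - {u}))"
      using sub \<open>v \<in> V\<close>
      by (intro vertex_cover_if_covers_except[OF G]) (auto elim: covers_except_mono)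
    moreover have "card (insert v (C - {u})) \<le> card C"
      using \<open>finite C\<close> \<open>u \<in> C\<close> by (rule card_insert_Diff_le)
    ultimately show ?thesis
      using that by blast
  qed
qed

lemma has_vc_reduced_edges_iff:
  assumes "graph V E" and "nbhd_path E v a b c d"
  shows "has_vc V E k \<longleftrightarrow> has_vc (V - {v}) (reduced_edges E v a b c d) k"
proof
  assume "has_vc V E k"
  then obtain C where "vertex_cover V E C" and "int (card C) \<le> k"
    unfolding has_vc_def by blast
  then show "has_vc (V - {v}) (reduced_edges E v a b c d) k"
    unfolding has_vc_def by (meson reduced_cover_of_cover[OF assms] of_nat_le_iff order_trans)
next
  assume "has_vc (V - {v}) (reduced_edges E v a b c d) k"
  then obtain C where "vertex_cover (V - {v}) (reduced_edges E v a b c d) C" and "int (card C) \<le> k"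
    unfolding has_vc_def by blast
  then show "has_vc V E k"
    unfolding has_vc_def by (meson cover_of_reduced_cover[OF assms] of_nat_le_iff order_trans)
qed

theorem proposition7:
  fixes V :: "'a set" and E :: "'a \<Rightarrow> 'a \<Rightarrow> bool" and k :: int and v :: 'a
  assumes "graph V E"
    and "cond_A E"
    and "cond_B V E"
    and "v \<in> V"
    and "card (nbhd E v) = 4"
    and "card (induced_edges E (nbhd E v)) \<ge> 3"
  shows "(\<exists>a b c d. nbhd_path E v a b c d)
    \<and> (\<forall>a b c d. nbhd_path E v a b c d \<longrightarrow>
          (has_vc V E k \<longleftrightarrow> has_vc (V - {v}) (reduced_edges E v a b c d) k))"
  using nbhd_path_exists[OF assms] has_vc_reduced_edges_iff[OF assms(1)] by blast

end
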